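(* Let $\lambda\in\mathbb R\cup i\mathbb R$ be a constant, $\vec H\in\Gamma(E)$, and let $\varphi\in\Gamma(\Sigma)$ solve $D\varphi=\vec H\cdot\varphi-2\lambda\varphi$. Fix $p\in M$, an orthonormal basis $(e_1,e_2)$ of $T_pM$, and a unit vector $e_3\in E_p$ with $\vec H(p)=|\vec H(p)|e_3$. With $F_{++},F_{--},F_{+-},F_{-+}$ defined by $F_{++}(X,Y)=\Re e\langle\nabla_X\varphi^{++},Y\cdot e_3\cdot\varphi^{--}\rangle$, $F_{--}(X,Y)=\Re e\langle\nabla_X\varphi^{--},Y\cdot e_3\cdot\varphi^{++}\rangle$, $F_{+-}(X,Y)=\Re e\langle\nabla_X\varphi^{+-},Y\cdot e_3\cdot\varphi^{-+}\rangle$, $F_{-+}(X,Y)=\Re e\langle\nabla_X\varphi^{-+},Y\cdot e_3\cdot\varphi^{+-}\rangle$, one has at $p$: $F_{++}(e_1,e_2)=F_{++}(e_2,e_1)-2\Re e\langle\lambda\varphi^{-+},e_1\cdot e_2\cdot e_3\cdot\varphi^{--}\rangle$, $F_{--}(e_1,e_2)=F_{--}(e_2,e_1)-2\Re e\langle\lambda\varphi^{+-},e_1\cdot e_2\cdot e_3\cdot\varphi^{++}\rangle$, $F_{+-}(e_1,e_2)=F_{+-}(e_2,e_1)-2\Re e\langle\lambda\varphi^{--},e_1\cdot e_2\cdot e_3\cdot\varphi^{-+}\rangle$, $F_{-+}(e_1,e_2)=F_{-+}(e_2,e_1)-2\Re e\langle\lambda\varphi^{++},e_1\cdot e_2\cdot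 e_3\cdot\varphi^{+-}\rangle$.
   Context: Setup. $(M^2,g)$ is an oriented Riemannian surface with a fixed spin structure, and $E\to M$ is an oriented real vector bundle of rank $2$ with a metric $\langle\cdot,\cdot\rangle$, a compatible connection $\nabla^E$ and a fixed spin structure. $\Sigma M=\Sigma^+M\oplus\Sigma^-M$ and $\Sigma E=\Sigma^+E\oplus\Sigma^-E$ denote the complex spinor bundles of $M$ and $E$ with their half-spinor splittings, spinorial connections $\nabla^{\Sigma M},\nabla^{\Sigma E}$ and Clifford multiplications $\cdot_M,\cdot_E$. The twisted spinor bundle is $\Sigma=\Sigma M\otimes\Sigma E$, with connection $\nabla=\nabla^{\Sigma M}\otimes\mathrm{Id}+\mathrm{Id}\otimes\nabla^{\Sigma E}$ and Clifford multiplication by vectors of $TM\oplus E$ given on $\varphi=\alpha\otimes\sigma$ by $X\cdot\varphi=(X\cdot_M\alpha)\otimes\overline{\sigma}$ if $X\in TM$ and $X\cdot\varphi=\alpha\otimes(X\cdot_E\sigma)$ if $X\in E$, where $\overline\sigma=\sigma^+-\sigma^-$; this extends to an action of the Clifford bundle $Cl(TM\oplus E)$. $\Sigma$ carries its natural Hermitian product $\langle\cdot,\cdot\rangle$ ($\mathbb C$-linear in the first slot, antilinear in the second), compatible with $\nabla$, for which Clifford multiplication by vectors is skew-Hermitian; $\Re e\langle\cdot,\cdot\rangle$ is the associated real scalar product and $|\cdot|$ the norm. The Dirac operator is $D\varphi=e_1\cdot\nabla_{e_1}\varphi+e_2\cdot\nabla_{e_2}\varphi$, $(e_1,e_2)$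 a local orthonormal frame of $TM$. Write $\Sigma^{\epsilon\delta}=\Sigma^\epsilon M\otimes\Sigma^\delta E$ ($\epsilon,\delta\in\{+,-\}$), decompose $\varphi=\varphi^{++}+\varphi^{--}+\varphi^{+-}+\varphi^{-+}$ accordingly, and set $\varphi^+=\varphi^{++}+\varphi^{--}$, $\varphi^-=\varphi^{+-}+\varphi^{-+}$. For $\lambda\in\mathbb C$, $\lambda X\cdot\varphi$ means complex scalar multiplication of $X\cdot\varphi$. *)

theory Defs
  imports Complex_Main
begin

text \<open>Pointwise model of the fibre at p of the twisted spinor bundle
  Sigma = Sigma M (x) Sigma E of a surface M with a rank-2 bundle E.
  Sigma_p M = C^2 with basis (alpha_plus, alpha_minus) spanning Sigma^+ M and Sigma^- M,
  Sigma_p E = C^2 with basis (sigma_plus, sigma_minus) spanning Sigma^+ E and Sigma^- E,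
  both chosen orthonormal and adapted to the orthonormal frames (e1,e2) of T_pM and
  (e3,e4) of E_p.  A twisted spinor is given by its four coordinates
  phi eps del = coefficient of alpha_eps (x) sigma_del (True = +, False = -),
  so the component phi^{eps del} lies in Sigma^{eps del}.\<close>

type_synonym spinor = "bool \<Rightarrow> bool \<Rightarrow> complex"

text \<open>Clifford action of e1 and e2 on Sigma_p M = C^2 (indexed by bool).
  They are skew-Hermitian, square to -1, anticommute and exchange Sigma^+ M, Sigma^- M.
  The flag ori records the orientation of the frame (e1,e2): for the other orientation
  e2 acts by the opposite matrix.\<close>
definition clM1 :: "(bool \<Rightarrow> complex) \<Rightarrow> (bool \<Rightarrow> complex)" where
  "clM1 a = (\<lambda>e. if e then - a False else a True)"

definition clM2 :: "bool \<Rightarrow> (bool \<Rightarrow> complex) \<Rightarrow> (bool \<Rightarrow> complex)" where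
  "clM2 ori a = (\<lambda>e. (if ori then 1 else -1) * (if e then \<i> * a False else \<i> * a True))"

definition clE3 :: "(bool \<Rightarrow> complex) \<Rightarrow> (bool \<Rightarrow> complex)" where
  "clE3 s = (\<lambda>d. if d then - s False else s True)"

text \<open>Twisted Clifford multiplication: X . (alpha (x) sigma) = (X . alpha) (x) sigma-bar for X in TM,
  alpha (x) (X . sigma) for X in E, where sigma-bar = sigma^+ - sigma^-.\<close>
definition cl1 :: "spinor \<Rightarrow> spinor" where
  "cl1 phi = (\<lambda>e d. clM1 (\<lambda>e'. phi e' d) e * (if d then 1 else -1))"

definition cl2 :: "bool \<Rightarrow> spinor \<Rightarrow> spinor" where
  "cl2 ori phi = (\<lambda>e d. clM2 ori (\<lambda>e'. phi e' d) e * (if d then 1 else -1))"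

definition cl3 :: "spinor \<Rightarrow> spinor" where
  "cl3 phi = (\<lambda>e d. clE3 (\<lambda>d'. phi e d') d)"

definition smult_sp :: "complex \<Rightarrow> spinor \<Rightarrow> spinor" where
  "smult_sp c phi = (\<lambda>e d. c * phi e d)"

definition herm :: "spinor \<Rightarrow> spinor \<Rightarrow> complex" where
  "herm u v = (\<Sum>e\<in>UNIV. \<Sum>d\<in>UNIV. u e d * cnj (v e d))"

definition add_sp :: "spinor \<Rightarrow> spinor \<Rightarrow> spinor" where
  "add_sp u v = (\<lambda>e d. u e d + v e d)"

definition diff_sp :: "spinor \<Rightarrow> spinor \<Rightarrow> spinor" where
  "diff_sp u v = (\<lambda>e d. u e d - v e d)"

definition proj :: "bool \<Rightarrow> bool \<Rightarrow> spinor \<Rightarrow> spinor" where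
  "proj eps del phi = (\<lambda>e d. if e = eps \<and> d = del then phi e d else 0)"

end

theory Submission
  imports Defs
begin

text \<open>Project the Dirac equation onto the component of type (-eps, del): since e1 and e2
  flip the M-chirality and e3 flips the E-chirality, it expresses
  e1 . nabla_{e1} phi^{eps del} through h e3 . phi^{-eps -del}, lam phi^{-eps del} and
  e2 . nabla_{e2} phi^{eps del}.  Pair this with e1 . e2 . e3 . phi^{-eps -del}, using that
  e1 is an isometry: the h-term drops out because e1 . e2 is skew-Hermitian and h is real,
  and the e2-term becomes F(e2, e1) because e2 . e1 . e2 = e1.\<close>

lemma herm_diff_left: "herm (diff_sp u v) w = herm u w - herm v w"
  by (simp add: herm_def diff_sp_def UNIV_bool algebra_simps)

lemma herm_smult_left: "herm (smult_sp c u) v = c * herm u v"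
  by (simp add: herm_def smult_sp_def UNIV_bool algebra_simps)

lemma herm_cl1_cl1: "herm (cl1 u) (cl1 v) = herm u v"
  by (simp add: herm_def cl1_def clM1_def UNIV_bool algebra_simps)

lemma herm_cl2_skew: "herm (cl2 ori u) v = - herm u (cl2 ori v)"
  by (cases ori) (simp_all add: herm_def cl2_def clM2_def UNIV_bool algebra_simps)

lemma cl2_cl1_cl2: "cl2 ori (cl1 (cl2 ori u)) = cl1 u"
  by (auto simp: cl1_def cl2_def clM1_def clM2_def fun_eq_iff)

lemma Re_herm_cl1_cl2_self: "Re (herm u (cl1 (cl2 ori u))) = 0"
  by (cases ori) (simp_all add: herm_def cl1_def cl2_def clM1_def clM2_def UNIV_bool algebra_simps)

lemma proj_cl1: "proj eps del (cl1 u) = cl1 (proj (\<not> eps) del u)"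
  by (auto simp: proj_def cl1_def clM1_def fun_eq_iff)

lemma proj_cl2: "proj eps del (cl2 ori u) = cl2 ori (proj (\<not> eps) del u)"
  by (auto simp: proj_def cl2_def clM2_def fun_eq_iff)

lemma proj_cl3: "proj eps del (cl3 u) = cl3 (proj eps (\<not> del) u)"
  by (auto simp: proj_def cl3_def clE3_def fun_eq_iff)

lemma proj_add: "proj eps del (add_sp u v) = add_sp (proj eps del u) (proj eps del v)"
  by (auto simp: proj_def add_sp_def fun_eq_iff)

lemma proj_diff: "proj eps del (diff_sp u v) = diff_sp (proj eps del u) (proj eps del v)"
  by (auto simp: proj_def diff_sp_def fun_eq_iff)

lemma proj_smult: "proj eps del (smult_sp c u) = smult_sp c (proj eps del u)"
  by (auto simp: proj_def smult_sp_def fun_eq_iff)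

lemma add_sp_eq_imp_eq_diff_sp: "add_sp u v = w \<Longrightarrow> u = diff_sp w v"
  by (auto simp: add_sp_def diff_sp_def fun_eq_iff algebra_simps)

lemma dirac_component:
  assumes "add_sp (cl1 psi1) (cl2 ori psi2) = diff_sp (smult_sp c (cl3 phi)) (smult_sp (2 * lam) phi)"
  shows "cl1 (proj eps del psi1)
    = diff_sp (diff_sp (smult_sp c (cl3 (proj (\<not> eps) (\<not> del) phi)))
                       (smult_sp (2 * lam) (proj (\<not> eps) del phi)))
              (cl2 ori (proj eps del psi2))"
proof (rule add_sp_eq_imp_eq_diff_sp)
  have "proj (\<not> eps) del (add_sp (cl1 psi1) (cl2 ori psi2))
      = proj (\<not> eps) del (diff_sp (smult_sp c (cl3 phi)) (smult_sp (2 * lam) phi))"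
    using assms by simp
  then show "add_sp (cl1 (proj eps del psi1)) (cl2 ori (proj eps del psi2))
    = diff_sp (smult_sp c (cl3 (proj (\<not> eps) (\<not> del) phi))) (smult_sp (2 * lam) (proj (\<not> eps) del phi))"
    by (simp add: proj_add proj_diff proj_smult proj_cl1 proj_cl2 proj_cl3)
qed

lemma dirac_swap_identity:
  fixes h :: real and eps del :: bool
  assumes dirac: "add_sp (cl1 psi1) (cl2 ori psi2)
                = diff_sp (smult_sp (complex_of_real h) (cl3 phi)) (smult_sp (2 * lam) phi)"
  defines "chi \<equiv> cl3 (proj (\<not> eps) (\<not> del) phi)"
  shows "Re (herm (proj eps del psi1) (cl2 ori chi))
    = Re (herm (proj eps del psi2) (cl1 chi))
      - 2 * Re (herm (smult_sp lam (proj (\<not> eps) del phi)) (cl1 (cl2 ori chi)))"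
proof -
  let ?x = "proj eps del psi1" and ?y = "proj eps del psi2" and ?phi' = "proj (\<not> eps) del phi"
  have "herm ?x (cl2 ori chi) = herm (cl1 ?x) (cl1 (cl2 ori chi))"
    by (simp add: herm_cl1_cl1)
  also have "\<dots> = complex_of_real h * herm chi (cl1 (cl2 ori chi))
      - 2 * herm (smult_sp lam ?phi') (cl1 (cl2 ori chi))
      - herm (cl2 ori ?y) (cl1 (cl2 ori chi))"
    by (simp add: dirac_component[OF dirac] chi_def herm_diff_left herm_smult_left mult.assoc)
  also have "herm (cl2 ori ?y) (cl1 (cl2 ori chi)) = - herm ?y (cl1 chi)"
    by (simp add: herm_cl2_skew cl2_cl1_cl2)
  finally show ?thesis
    by (simp add: Re_herm_cl1_cl2_self)
qed

text \<open>phi = phi(p); psi1 = nabla_{e1} phi (p); psi2 = nabla_{e2} phi (p);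
  H(p) = h e3 with h = |H(p)|.  Since nabla preserves the splitting,
  nabla_X phi^{eps del} = proj eps del (nabla_X phi).  The Dirac equation at p reads
  e1 . psi1 + e2 . psi2 = h e3 . phi - 2 lam phi.\<close>
theorem mainTheorem6:
  fixes ori :: bool and h :: real and lam :: complex and phi psi1 psi2 :: spinor
  assumes lam: "Im lam = 0 \<or> Re lam = 0"
    and h: "h \<ge> 0"
    and dirac: "add_sp (cl1 psi1) (cl2 ori psi2)
                = diff_sp (smult_sp (complex_of_real h) (cl3 phi)) (smult_sp (2 * lam) phi)"
  shows "(Re (herm (proj True True psi1) (cl2 ori (cl3 (proj False False phi)))) = Re (herm (proj True True psi2) (cl1 (cl3 (proj False False phi)))) - 2 * Re (herm (smult_sp lam (proj False True phi)) (cl1 (cl2 ori (cl3 (proj False False phi))))))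
    \<and> (Re (herm (proj False False psi1) (cl2 ori (cl3 (proj True True phi)))) = Re (herm (proj False False psi2) (cl1 (cl3 (proj True True phi)))) - 2 * Re (herm (smult_sp lam (proj True False phi)) (cl1 (cl2 ori (cl3 (proj True True phi))))))
    \<and> (Re (herm (proj True False psi1) (cl2 ori (cl3 (proj False True phi)))) = Re (herm (proj True False psi2) (cl1 (cl3 (proj False True phi)))) - 2 * Re (herm (smult_sp lam (proj False False phi)) (cl1 (cl2 ori (cl3 (proj False True phi))))))
    \<and> (Re (herm (proj False True psi1) (cl2 ori (cl3 (proj True False phi)))) = Re (herm (proj False True psi2) (cl1 (cl3 (proj True False phi)))) - 2 * Re (herm (smult_sp lam (proj True True phi)) (cl1 (cl2 ori (cl3 (proj True False phi))))))"
proof -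
  note swap = dirac_swap_identity[OF dirac]
  show ?thesis
    using swap[of True True] swap[of False False] swap[of True False] swap[of False True]
    by simp
qed

end
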